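(* Let $n\geqslant1$. Every rainbow on $\{0,\dots,n\}$ of maximal size (among all rainbows on $\{0,\dots,n\}$) has exactly $\lfloor\frac{n+1}{2}\rfloor$ arcs.
   Context: An arc is a pair $\underline{x}\to\underline{y}$ of integers $0\leqslant x<y\leqslant n$, with weight $\binom{n}{x,\,y-x,\,n-y}=\frac{n!}{x!(y-x)!(n-y)!}$ (this is the number of subgroup inclusions $H\leqslant K$ in $C_{p_1\cdots p_n}$, $p_i$ distinct primes, with $|H|$ a product of $x$ of the primes and $|K|$ a product of $y$ of them). A rainbow on $\{0,\dots,n\}$ is a set of arcs $\{\underline{x_i}\to\underline{y_i}\}_{0\leqslant i\leqslant m}$ with $x_0<x_1<\dots<x_m<y_m<\dots<y_0$; its size is the sum of the weights of its arcs. *)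

theory Defs
  imports Main
begin

definition arc_weight :: "nat \<Rightarrow> nat \<times> nat \<Rightarrow> nat" where
  "arc_weight n a = fact n div (fact (fst a) * fact (snd a - fst a) * fact (n - snd a))"

text \<open>A rainbow on {0..n}: a nonempty finite set of arcs x_0 -> y_0, ..., x_m -> y_m with
  x_0 < ... < x_m < y_m < ... < y_0, i.e. any two distinct arcs are strictly nested.\<close>

definition is_arc :: "nat \<Rightarrow> nat \<times> nat \<Rightarrow> bool" where
  "is_arc n a \<longleftrightarrow> fst a < snd a \<and> snd a \<le> n"

definition rainbow :: "nat \<Rightarrow> (nat \<times> nat) set \<Rightarrow> bool" where
  "rainbow n R \<longleftrightarrow> finite R \<and> R \<noteq> {} \<and> (\<forall>a\<in>R. is_arc n a) \<and>
     (\<forall>a\<in>R. \<forall>b\<in>R. a \<noteq> b \<longrightarrow>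
        (fst a < fst b \<and> snd b < snd a) \<or> (fst b < fst a \<and> snd a < snd b))"

definition rainbow_size :: "nat \<Rightarrow> (nat \<times> nat) set \<Rightarrow> nat" where
  "rainbow_size n R = (\<Sum>a\<in>R. arc_weight n a)"

end

theory Submission
  imports Defs "HOL.Binomial_Plus"
begin

(* Writing d = x + (n - y), the weight of the arc x -> y is C(n,d) C(d,x), which is at most
   c(d) = C(n,d) C(d, d div 2), with equality for the centred arc d div 2 -> n - (d - d div 2).
   The values of d on a rainbow form a subset of {0..n-1} whose elements differ by at least 2,
   and every such set comes from a rainbow of centred arcs. So maximal rainbows correspond to
   such sets maximising the sum of c, a unimodal sequence. A set with fewer than (n+1)/2
   elements can be moved towards the mode of c onto a progression t, t+2, ... without decreasing
   the sum, and the progression can then be extended by a term of positive weight, unless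
   n = 2k+1 and it is 1, 3, ..., 2k-1. In that case 0, 2, ..., 2k is better: the sums of c
   over even and over odd d are the coefficients of x^0 and x^1 in (1 + x + 1/x)^n, and these
   trinomial coefficients decrease away from the centre. *)

lemma arc_weight_eq:
  assumes "x \<le> y" "y \<le> n"
  shows "arc_weight n (x, y) = (n choose (x + (n - y))) * ((x + (n - y)) choose x)"
proof -
  define s where "s = x + (n - y)"
  have s: "s \<le> n" "x \<le> s" "s - x = n - y" "n - s = y - x"
    using assms by (auto simp: s_def)
  have "fact n = fact s * fact (n - s) * (n choose s)"
    using binomial_fact_lemma[OF s(1)] by simp
  also have "fact s = fact x * fact (s - x) * (s choose x)"
    using binomial_fact_lemma[OF s(2)] by simp
  finally have "fact n = (fact x * fact (y - x) * fact (n - y)) * ((n choose s) * (s choose x))"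
    using s by (simp add: algebra_simps)
  then show ?thesis
    unfolding arc_weight_def s_def[symmetric] by simp
qed

definition central_weight :: "nat \<Rightarrow> nat \<Rightarrow> nat" where
  "central_weight n d = (n choose d) * (d choose (d div 2))"

lemma arc_weight_le_central_weight:
  assumes "x \<le> y" "y \<le> n"
  shows "arc_weight n (x, y) \<le> central_weight n (x + (n - y))"
  unfolding arc_weight_eq[OF assms] central_weight_def
  by (rule mult_le_mono2) (metis binomial_maximum)

lemma central_weight_pos: "d \<le> n \<Longrightarrow> 0 < central_weight n d"
  unfolding central_weight_def by simp

lemma central_weight_eq_0: "n < d \<Longrightarrow> central_weight n d = 0"
  unfolding central_weight_def by simp

subsection \<open>Unimodality of the central weights\<close>

lemma binomial_Suc_mult: "(n choose Suc k) * Suc k = (n choose k) * (n - k)"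
  using binomial_absorption[of k n] binomial_absorb_comp[of n k] by (simp add: mult.commute)

lemma central_binomial_Suc:
  "(Suc d choose (Suc d div 2)) * (d div 2 + 1) = (d choose (d div 2)) * Suc d"
proof (cases "even d")
  case True
  then obtain j where d: "d = 2 * j" by blast
  have "(Suc (2 * j) choose j) = (Suc (2 * j) choose Suc j)"
    using binomial_symmetric[of "Suc j" "Suc (2 * j)"] by simp
  then show ?thesis
    using Suc_times_binomial_eq[of "2 * j" j] by (simp add: d mult.commute)
next
  case False
  then obtain j where d: "d = Suc (2 * j)" by (metis oddE Suc_eq_plus1)
  show ?thesis
    using Suc_times_binomial[of j "Suc (2 * j)"] by (simp add: d mult.commute)
qed

lemma central_weight_Suc:
  "central_weight n (Suc d) * (d div 2 + 1) = central_weight n d * (n - d)"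
proof -
  have "central_weight n (Suc d) * (d div 2 + 1)
      = (n choose Suc d) * ((Suc d choose (Suc d div 2)) * (d div 2 + 1))"
    unfolding central_weight_def by (simp only: ac_simps)
  also have "\<dots> = ((n choose Suc d) * Suc d) * (d choose (d div 2))"
    by (subst central_binomial_Suc) (simp only: ac_simps)
  also have "\<dots> = central_weight n d * (n - d)"
    unfolding binomial_Suc_mult central_weight_def by (simp only: ac_simps)
  finally show ?thesis .
qed

text \<open>The ratio of consecutive central weights is (n - d) / (d div 2 + 1), which decreases
  in d; the mode is where it drops to at most 1.\<close>

lemma central_weight_unimodal:
  assumes "1 \<le> n"
  obtains M where "M < n" "mono_on {..M} (central_weight n)"
    "antimono_on {M..} (central_weight n)"
proof
  define M where "M = (LEAST d. n - d \<le> d div 2 + 1)"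
  show "M < n"
  proof -
    have "M \<le> n - 1"
      unfolding M_def by (rule Least_le) (use assms in simp)
    then show ?thesis using assms by simp
  qed
  have up: "central_weight n d \<le> central_weight n (Suc d)" if "d < M" for d
  proof -
    have "d div 2 + 1 \<le> n - d"
      using not_less_Least[OF that[unfolded M_def]] by simp
    then have "central_weight n d * (d div 2 + 1) \<le> central_weight n (Suc d) * (d div 2 + 1)"
      unfolding central_weight_Suc by (rule mult_le_mono2)
    then show ?thesis by (rule mult_right_le_imp_le) simp
  qed
  have down: "central_weight n (Suc d) \<le> central_weight n d" if "M \<le> d" for d
  proof -
    have "n - M \<le> M div 2 + 1"
      unfolding M_def by (rule LeastI[of _ n]) simp
    then have "n - d \<le> d div 2 + 1"
      using that div_le_mono[OF that, of 2] by linarith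
    then have "central_weight n (Suc d) * (d div 2 + 1) \<le> central_weight n d * (d div 2 + 1)"
      unfolding central_weight_Suc by (rule mult_le_mono2)
    then show ?thesis by (rule mult_right_le_imp_le) simp
  qed
  show "mono_on {..M} (central_weight n)"
    by (rule mono_onI, rule lift_Suc_mono_le_ivl[of "{..<M}"]) (use up in auto)
  show "antimono_on {M..} (central_weight n)"
    by (rule monotone_onI, rule lift_Suc_antimono_le_ivl[of "{M..}"]) (use down in auto)
qed

lemma unimodal_le_between:
  fixes g :: "nat \<Rightarrow> 'a::order"
  assumes "mono_on {..M} g" "antimono_on {M..} g"
    and "d \<le> f \<and> f \<le> M \<or> M \<le> f \<and> f \<le> d"
  shows "g d \<le> g f"
  using assms(3) monotone_onD[OF assms(1), of d f] monotone_onD[OF assms(2), of f d] by auto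

subsection \<open>Trinomial coefficients\<close>

definition multinomial3 :: "nat \<Rightarrow> nat \<Rightarrow> nat \<Rightarrow> nat" where
  "multinomial3 n a b = (n choose (a + b)) * ((a + b) choose a)"

lemma multinomial3_commute: "multinomial3 n a b = multinomial3 n b a"
  unfolding multinomial3_def
  by (metis add.commute binomial_symmetric le_add1 add_diff_cancel_left')

lemma multinomial3_eq_0: "n < a + b \<Longrightarrow> multinomial3 n a b = 0"
  unfolding multinomial3_def by simp

lemma multinomial3_Suc_Suc:
  "multinomial3 (Suc n) (Suc a) (Suc b)
    = multinomial3 n (Suc a) (Suc b) + multinomial3 n a (Suc b) + multinomial3 n (Suc a) b"
proof -
  have "Suc a + Suc b = Suc (Suc (a + b))" by simp
  then show ?thesis
    unfolding multinomial3_def by (simp add: algebra_simps)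
qed

lemma multinomial3_0_Suc:
  "multinomial3 (Suc n) 0 (Suc b) = multinomial3 n 0 (Suc b) + multinomial3 n 0 b"
  unfolding multinomial3_def by simp

text \<open>trinomial n i is the coefficient of x^i in (1 + x + 1/x)^n: a word of length n over
  1, x, 1/x contributes to it iff it has a + i letters x and a letters 1/x for some a.\<close>

definition trinomial :: "nat \<Rightarrow> nat \<Rightarrow> nat" where
  "trinomial n i = (\<Sum>a\<le>n. multinomial3 n a (a + i))"

lemma trinomial_eq_sum: "n \<le> N \<Longrightarrow> trinomial n i = (\<Sum>a\<le>N. multinomial3 n a (a + i))"
proof (induction N rule: dec_induct)
  case base
  then show ?case by (simp add: trinomial_def)
next
  case (step N)
  then show ?case by (simp add: multinomial3_eq_0)
qed

lemma trinomial_eq_shifted_sum: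
  "trinomial n i = multinomial3 n 0 i + (\<Sum>a\<le>n. multinomial3 n (Suc a) (Suc a + i))"
proof -
  have "(\<Sum>a\<le>Suc n. multinomial3 n a (a + i))
      = multinomial3 n 0 i + (\<Sum>a\<le>n. multinomial3 n (Suc a) (Suc a + i))"
    by (subst sum.atMost_Suc_shift) simp
  then show ?thesis
    using trinomial_eq_sum[of n "Suc n" i] by simp
qed

lemma trinomial_Suc_Suc:
  "trinomial (Suc n) (Suc i) = trinomial n i + trinomial n (Suc i) + trinomial n (Suc (Suc i))"
proof -
  have "trinomial (Suc n) (Suc i)
      = multinomial3 (Suc n) 0 (Suc i) + (\<Sum>a\<le>n. multinomial3 (Suc n) (Suc a) (Suc a + Suc i))"
    unfolding trinomial_def by (subst sum.atMost_Suc_shift) simp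
  also have "\<dots> = (multinomial3 n 0 (Suc i) + (\<Sum>a\<le>n. multinomial3 n (Suc a) (Suc a + Suc i)))
      + (multinomial3 n 0 i + (\<Sum>a\<le>n. multinomial3 n (Suc a) (Suc a + i)))
      + (\<Sum>a\<le>n. multinomial3 n a (a + Suc (Suc i)))"
    by (simp add: multinomial3_0_Suc multinomial3_Suc_Suc sum.distrib algebra_simps)
  also have "\<dots> = trinomial n (Suc i) + trinomial n i + trinomial n (Suc (Suc i))"
    by (simp only: trinomial_eq_shifted_sum[of n i] trinomial_eq_shifted_sum[of n "Suc i"]
        trinomial_def[of n "Suc (Suc i)"])
  finally show ?thesis by simp
qed

lemma trinomial_Suc_0: "trinomial (Suc n) 0 = trinomial n 0 + 2 * trinomial n 1"
proof -
  have "trinomial (Suc n) 0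
      = multinomial3 (Suc n) 0 0 + (\<Sum>a\<le>n. multinomial3 (Suc n) (Suc a) (Suc a))"
    unfolding trinomial_def by (subst sum.atMost_Suc_shift) simp
  also have "\<dots> = (multinomial3 n 0 0 + (\<Sum>a\<le>n. multinomial3 n (Suc a) (Suc a + 0)))
      + (\<Sum>a\<le>n. multinomial3 n a (a + 1)) + (\<Sum>a\<le>n. multinomial3 n (Suc a) a)"
    by (simp add: multinomial3_def multinomial3_Suc_Suc sum.distrib algebra_simps)
  also have "(\<Sum>a\<le>n. multinomial3 n (Suc a) a) = trinomial n 1"
    unfolding trinomial_def by (rule sum.cong) (auto simp: multinomial3_commute)
  finally show ?thesis
    by (simp only: trinomial_eq_shifted_sum[symmetric] trinomial_def[symmetric])
qed

lemma trinomial_Suc_le: "trinomial n (Suc i) \<le> trinomial n i"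
proof (induction n arbitrary: i)
  case 0
  then show ?case by (simp add: trinomial_def multinomial3_def)
next
  case (Suc n)
  have antimono: "trinomial n j \<le> trinomial n i" if "i \<le> j" for i j
    using Suc.IH that by (rule lift_Suc_antimono_le)
  show ?case
  proof (cases i)
    case 0
    then show ?thesis
      using Suc.IH[of 1] by (simp add: trinomial_Suc_0 trinomial_Suc_Suc numeral_2_eq_2)
  next
    case (Suc i')
    then show ?thesis
      using antimono[of i' "Suc (Suc (Suc i'))"] by (simp add: trinomial_Suc_Suc)
  qed
qed

lemma trinomial_0_eq: "trinomial n 0 = (\<Sum>j\<le>n. central_weight n (2 * j))"
  unfolding trinomial_def multinomial3_def central_weight_def by (simp add: mult_2)

lemma trinomial_1_eq: "trinomial n 1 = (\<Sum>j\<le>n. central_weight n (Suc (2 * j)))"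
  unfolding trinomial_def multinomial3_def central_weight_def by (simp add: mult_2)

lemma central_weight_odd_sum_less:
  assumes n: "n = Suc (2 * k)"
  shows "(\<Sum>j<k. central_weight n (Suc (2 * j))) < (\<Sum>j\<le>k. central_weight n (2 * j))"
proof -
  have "(\<Sum>j<k. central_weight n (Suc (2 * j)))
      < (\<Sum>j<k. central_weight n (Suc (2 * j))) + central_weight n (Suc (2 * k))"
    using central_weight_pos[of "Suc (2 * k)" n] n by simp
  also have "\<dots> = (\<Sum>j\<le>k. central_weight n (Suc (2 * j)))"
    by (simp only: lessThan_Suc_atMost[symmetric] sum.lessThan_Suc)
  also have "\<dots> \<le> trinomial n 1"
    unfolding trinomial_1_eq by (rule sum_mono2) (use n in auto)
  also have "\<dots> \<le> trinomial n 0"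
    using trinomial_Suc_le[of n 0] by simp
  also have "\<dots> = (\<Sum>j\<le>k. central_weight n (2 * j))"
    unfolding trinomial_0_eq
    by (rule sum.mono_neutral_right) (use n in \<open>auto simp: central_weight_eq_0\<close>)
  finally show ?thesis .
qed

subsection \<open>Sets with gaps of at least two\<close>

definition spaced :: "nat set \<Rightarrow> bool" where
  "spaced D \<longleftrightarrow> (\<forall>a\<in>D. \<forall>b\<in>D. a < b \<longrightarrow> a + 2 \<le> b)"

lemma spaced_subset: "spaced D \<Longrightarrow> S \<subseteq> D \<Longrightarrow> spaced S"
  unfolding spaced_def by blast

lemma spaced_Suc_notin: "spaced D \<Longrightarrow> d \<in> D \<Longrightarrow> d \<notin> Suc ` D"
  unfolding spaced_def by fastforce

lemma spaced_progression: "spaced ((\<lambda>j. s + 2 * j) ` A)"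
  unfolding spaced_def by auto

lemma sum_progression: "(\<Sum>d\<in>(\<lambda>j::nat. s + 2 * j) ` A. g d) = (\<Sum>j\<in>A. g (s + 2 * j))"
  by (subst sum.reindex) (auto intro: inj_onI)

lemma card_spaced_le:
  assumes "spaced S" "S \<subseteq> {u..<v}"
  shows "2 * card S \<le> v + 1 - u"
proof -
  let ?h = "\<lambda>x. (x - u) div 2"
  have "strict_mono_on S ?h"
  proof (rule strict_mono_onI)
    fix x y assume "x \<in> S" "y \<in> S" "x < y"
    then have "u \<le> x" "x + 2 \<le> y"
      using assms unfolding spaced_def by auto
    then have "(x - u + 2) div 2 \<le> (y - u) div 2"
      by (intro div_le_mono) linarith
    then show "?h x < ?h y" by simp
  qed
  then have "card S = card (?h ` S)"
    by (intro card_image[symmetric] strict_mono_on_imp_inj_on)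
  also have "\<dots> \<le> card {..<(v + 1 - u) div 2}"
  proof (rule card_mono)
    show "?h ` S \<subseteq> {..<(v + 1 - u) div 2}"
    proof
      fix z assume "z \<in> ?h ` S"
      then obtain x where "x \<in> S" "z = ?h x" by blast
      moreover have "u \<le> x" "x < v"
        using assms(2) \<open>x \<in> S\<close> by auto
      then have "(x - u + 2) div 2 \<le> (v + 1 - u) div 2"
        by (intro div_le_mono) linarith
      ultimately show "z \<in> {..<(v + 1 - u) div 2}" by simp
    qed
  qed simp
  finally show ?thesis by simp
qed

definition card_below :: "nat set \<Rightarrow> nat \<Rightarrow> nat" where
  "card_below D x = card (D \<inter> {..<x})"

lemma card_below_add:
  assumes "u \<le> v"
  shows "card_below D v = card_below D u + card (D \<inter> {u..<v})"
proof -
  have "D \<inter> {..<v} = (D \<inter> {..<u}) \<union> (D \<inter> {u..<v})"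
    using assms by auto
  also have "card \<dots> = card (D \<inter> {..<u}) + card (D \<inter> {u..<v})"
    by (rule card_Un_disjoint) auto
  finally show ?thesis
    unfolding card_below_def .
qed

lemma card_below_less:
  assumes "d \<in> D" "d < c"
  shows "card_below D d < card_below D c"
proof -
  have "D \<inter> {d..<c} \<noteq> {}"
    using assms by auto
  then have "0 < card (D \<inter> {d..<c})"
    by (simp add: card_gt_0_iff)
  then show ?thesis
    using card_below_add[of d c D] assms(2) by simp
qed

lemma spaced_card_below_gap:
  assumes "spaced D" "u \<le> v" "v \<notin> Suc ` D"
  shows "u + 2 * card_below D v \<le> v + 2 * card_below D u"
proof -
  let ?S = "D \<inter> {u..<v}"
  have "2 * card ?S \<le> v - u"
  proof (cases "?S = {}")
    case False
    have "x < v - 1" if "x \<in> ?S" for x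
      using that assms(3) by (cases "Suc x = v") auto
    then have "?S \<subseteq> {u..<v - 1}" by auto
    moreover from False have "u < v - 1"
      using \<open>?S \<subseteq> {u..<v - 1}\<close> by auto
    ultimately show ?thesis
      using card_spaced_le[of ?S u "v - 1"] spaced_subset[OF assms(1)] by simp
  qed simp
  then show ?thesis
    using card_below_add[OF assms(2), of D] assms(2) by linarith
qed

lemma bij_betw_card_below:
  assumes "finite D"
  shows "bij_betw (card_below D) D {..<card D}"
proof -
  have "strict_mono_on D (card_below D)"
    by (rule strict_mono_onI) (rule card_below_less)
  then have inj: "inj_on (card_below D) D"
    by (rule strict_mono_on_imp_inj_on)
  have "card_below D d < card D" if "d \<in> D" for d
    unfolding card_below_def using assms that by (intro psubset_card_mono) auto
  then have "card_below D ` D \<subseteq> {..<card D}" by auto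
  moreover have "card (card_below D ` D) = card {..<card D}"
    using inj by (simp add: card_image)
  ultimately show ?thesis
    using inj by (simp add: bij_betw_def card_subset_eq)
qed

text \<open>f is the position of the rank of d in the progression of step 2 that puts the rank of c
  at c.\<close>

lemma spaced_card_below_towards:
  assumes "spaced D" "c \<notin> Suc ` D" "d \<in> D"
  defines "f \<equiv> c - 2 * card_below D c + 2 * card_below D d"
  shows "d \<le> f \<and> f < c \<or> c \<le> f \<and> f \<le> d"
proof -
  have "2 * card_below D c \<le> c"
    using spaced_card_below_gap[OF assms(1) _ assms(2), of 0] by (simp add: card_below_def)
  moreover
  have "d \<le> f \<and> f < c" if "d < c"
    using spaced_card_below_gap[OF assms(1) _ assms(2), of d] card_below_less[OF assms(3) that]
      that calculation unfolding f_def by linarith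
  moreover
  have "c \<le> f \<and> f \<le> d" if "c \<le> d"
    using spaced_card_below_gap[OF assms(1) that spaced_Suc_notin[OF assms(1,3)]]
      card_below_add[OF that, of D] calculation unfolding f_def by linarith
  ultimately show ?thesis by linarith
qed

lemma spaced_sum_le_progression_sum:
  fixes g :: "nat \<Rightarrow> 'a::ordered_comm_monoid_add"
  assumes "finite D" "spaced D" "D \<subseteq> {..<n}" "M < n"
    and "mono_on {..M} g" "antimono_on {M..} g"
  obtains t where "t \<le> Suc M" "\<forall>i<card D. t + 2 * i < n"
    "sum g D \<le> (\<Sum>i<card D. g (t + 2 * i))"
proof
  define c where "c = (if M \<in> D then M else Suc M)"
  have c: "c \<notin> Suc ` D"
    using spaced_Suc_notin[OF assms(2)] by (auto simp: c_def)
  define t where "t = c - 2 * card_below D c"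
  show "t \<le> Suc M"
    unfolding t_def c_def by (cases "M \<in> D") auto
  have between: "d \<le> t + 2 * card_below D d \<and> t + 2 * card_below D d \<le> M
      \<or> M \<le> t + 2 * card_below D d \<and> t + 2 * card_below D d \<le> d" if "d \<in> D" for d
    using spaced_card_below_towards[OF assms(2) c that] unfolding t_def c_def
    by (cases "M \<in> D") auto
  have bij: "bij_betw (card_below D) D {..<card D}"
    using bij_betw_card_below[OF assms(1)] .
  show "\<forall>i<card D. t + 2 * i < n"
  proof (intro allI impI)
    fix i assume "i < card D"
    then have "i \<in> card_below D ` D"
      using bij by (simp add: bij_betw_def)
    then obtain d where "d \<in> D" "i = card_below D d" by blast
    then show "t + 2 * i < n"
      using between[of d] assms(3,4) by auto
  qed
  have "sum g D \<le> (\<Sum>d\<in>D. g (t + 2 * card_below D d))"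
    using between assms(5,6) by (intro sum_mono unimodal_le_between) auto
  also have "\<dots> = (\<Sum>i<card D. g (t + 2 * i))"
    using sum.reindex_bij_betw[OF bij, of "\<lambda>i. g (t + 2 * i)"] by simp
  finally show "sum g D \<le> (\<Sum>i<card D. g (t + 2 * i))" .
qed

lemma central_weight_progression_extend:
  assumes "t \<le> n" "\<forall>i<k. t + 2 * i < n" "2 * k < n"
  obtains s where "\<forall>j\<le>k. s + 2 * j < n"
    "(\<Sum>i<k. central_weight n (t + 2 * i)) < (\<Sum>j\<le>k. central_weight n (s + 2 * j))"
proof -
  let ?g = "central_weight n"
  consider (prepend) "2 \<le> t" | (append) "t + 2 * k < n" | (odd) "n = Suc (2 * k)" "t = 1"
    using assms(3) by linarith
  then show ?thesis
  proof cases
    case prepend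
    define s where "s = t - 2"
    with prepend have s: "t = s + 2" by simp
    have range: "s + 2 * j < n" if "j \<le> k" for j
    proof (cases j)
      case 0
      then show ?thesis using s assms(1) by simp
    next
      case (Suc i)
      then show ?thesis using that s assms(2) by auto
    qed
    have "(\<Sum>i<k. ?g (t + 2 * i)) < ?g s + (\<Sum>i<k. ?g (s + 2 * Suc i))"
      using s assms(1) central_weight_pos[of s n] by simp
    also have "\<dots> = (\<Sum>j\<le>k. ?g (s + 2 * j))"
      using sum.atMost_shift[of "\<lambda>j. ?g (s + 2 * j)" k] by simp
    finally show ?thesis
      using range by (intro that[of s]) auto
  next
    case append
    have "(\<Sum>i<k. ?g (t + 2 * i)) < (\<Sum>i<k. ?g (t + 2 * i)) + ?g (t + 2 * k)"
      using append central_weight_pos[of "t + 2 * k" n] by simp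
    also have "\<dots> = (\<Sum>j\<le>k. ?g (t + 2 * j))"
      by (simp only: lessThan_Suc_atMost[symmetric] sum.lessThan_Suc)
    finally show ?thesis
      using append by (intro that[of t]) auto
  next
    case odd
    then show ?thesis
      using central_weight_odd_sum_less[of n k] by (intro that[of 0]) auto
  qed
qed

lemma spaced_central_weight_sum_improvable:
  assumes "finite D" "spaced D" "D \<subseteq> {..<n}" "2 * card D < n"
  obtains F where "finite F" "spaced F" "F \<subseteq> {..<n}"
    "(\<Sum>d\<in>D. central_weight n d) < (\<Sum>d\<in>F. central_weight n d)"
proof -
  have "1 \<le> n"
    using assms(4) by simp
  then obtain M where M: "M < n" "mono_on {..M} (central_weight n)"
    "antimono_on {M..} (central_weight n)"
    by (rule central_weight_unimodal)
  obtain t where t: "t \<le> Suc M" "\<forall>i<card D. t + 2 * i < n"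
    and le: "(\<Sum>d\<in>D. central_weight n d) \<le> (\<Sum>i<card D. central_weight n (t + 2 * i))"
    by (rule spaced_sum_le_progression_sum[OF assms(1-3) M])
  obtain s where s: "\<forall>j\<le>card D. s + 2 * j < n"
    and less: "(\<Sum>i<card D. central_weight n (t + 2 * i))
      < (\<Sum>j\<le>card D. central_weight n (s + 2 * j))"
    using central_weight_progression_extend[of t n "card D"] t M(1) assms(4) by auto
  let ?F = "(\<lambda>j. s + 2 * j) ` {..card D}"
  show ?thesis
  proof (rule that[of ?F])
    show "finite ?F" "spaced ?F"
      by (simp_all add: spaced_progression)
    show "?F \<subseteq> {..<n}"
      using s by auto
    show "(\<Sum>d\<in>D. central_weight n d) < (\<Sum>d\<in>?F. central_weight n d)"
      using le less by (simp add: sum_progression)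
  qed
qed

subsection \<open>Rainbows and spaced sets\<close>

definition arc_deficiency :: "nat \<Rightarrow> nat \<times> nat \<Rightarrow> nat" where
  "arc_deficiency n a = fst a + (n - snd a)"

lemma rainbow_arc_deficiency_gap:
  assumes "rainbow n R" "a \<in> R" "b \<in> R" "a \<noteq> b"
  shows "arc_deficiency n a + 2 \<le> arc_deficiency n b \<or> arc_deficiency n b + 2 \<le> arc_deficiency n a"
proof -
  have "fst a < fst b \<and> snd b < snd a \<or> fst b < fst a \<and> snd a < snd b"
    "snd a \<le> n" "snd b \<le> n"
    using assms unfolding rainbow_def is_arc_def by blast+
  then show ?thesis
    unfolding arc_deficiency_def by linarith
qed

lemma rainbow_arc_deficiencies:
  assumes "rainbow n R"
  shows "inj_on (arc_deficiency n) R" "spaced (arc_deficiency n ` R)"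
    "arc_deficiency n ` R \<subseteq> {..<n}"
proof -
  show "inj_on (arc_deficiency n) R"
    by (rule inj_onI, rule ccontr) (use rainbow_arc_deficiency_gap[OF assms] in fastforce)
  show "spaced (arc_deficiency n ` R)"
    unfolding spaced_def using rainbow_arc_deficiency_gap[OF assms] by fastforce
  show "arc_deficiency n ` R \<subseteq> {..<n}"
    using assms unfolding rainbow_def is_arc_def arc_deficiency_def by auto
qed

lemma rainbow_size_le_central_weight_sum:
  assumes "rainbow n R"
  shows "rainbow_size n R \<le> (\<Sum>d\<in>arc_deficiency n ` R. central_weight n d)"
proof -
  have "arc_weight n a \<le> central_weight n (arc_deficiency n a)" if "a \<in> R" for a
    using assms that arc_weight_le_central_weight[of "fst a" "snd a" n]
    unfolding rainbow_def is_arc_def arc_deficiency_def by auto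
  then have "rainbow_size n R \<le> (\<Sum>a\<in>R. central_weight n (arc_deficiency n a))"
    unfolding rainbow_size_def by (rule sum_mono)
  also have "\<dots> = (\<Sum>d\<in>arc_deficiency n ` R. central_weight n d)"
    by (simp add: sum.reindex[OF rainbow_arc_deficiencies(1)[OF assms]])
  finally show ?thesis .
qed

definition centred_arc :: "nat \<Rightarrow> nat \<Rightarrow> nat \<times> nat" where
  "centred_arc n d = (d div 2, n - (d - d div 2))"

lemma centred_arc:
  assumes "d < n"
  shows "is_arc n (centred_arc n d)" "arc_deficiency n (centred_arc n d) = d"
    "arc_weight n (centred_arc n d) = central_weight n d"
proof -
  have d: "d div 2 \<le> n - (d - d div 2)" "d div 2 + (n - (n - (d - d div 2))) = d"
    using assms by linarith+
  show "is_arc n (centred_arc n d)" "arc_deficiency n (centred_arc n d) = d"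
    using assms d unfolding is_arc_def centred_arc_def arc_deficiency_def by simp_all linarith
  show "arc_weight n (centred_arc n d) = central_weight n d"
    unfolding centred_arc_def arc_weight_eq[OF d(1) diff_le_self] d(2) central_weight_def ..
qed

lemma rainbow_centred_arcs:
  assumes "finite F" "spaced F" "F \<subseteq> {..<n}" "F \<noteq> {}"
  shows "rainbow n (centred_arc n ` F)"
    "rainbow_size n (centred_arc n ` F) = (\<Sum>d\<in>F. central_weight n d)"
proof -
  have nested: "fst (centred_arc n d) < fst (centred_arc n e)
      \<and> snd (centred_arc n e) < snd (centred_arc n d)" if "d \<in> F" "e \<in> F" "d < e" for d e
  proof -
    have "d + 2 \<le> e" "e < n"
      using that assms(2,3) unfolding spaced_def by auto
    moreover have "2 * (d div 2) \<le> d" "d \<le> 2 * (d div 2) + 1"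
      "2 * (e div 2) \<le> e" "e \<le> 2 * (e div 2) + 1" by linarith+
    ultimately show ?thesis
      unfolding centred_arc_def by simp linarith
  qed
  have inj: "inj_on (centred_arc n) F"
    by (rule inj_on_inverseI[of _ "arc_deficiency n"]) (use assms(3) centred_arc in auto)
  show "rainbow n (centred_arc n ` F)"
    unfolding rainbow_def using assms centred_arc(1) nested
    by (auto simp: inj_on_eq_iff[OF inj]) (metis linorder_neqE_nat)+
  show "rainbow_size n (centred_arc n ` F) = (\<Sum>d\<in>F. central_weight n d)"
    unfolding rainbow_size_def sum.reindex[OF inj] comp_def
    using assms(3) centred_arc(3) by (intro sum.cong) auto
qed

theorem corollary5p12:
  fixes n :: nat and R :: "(nat \<times> nat) set"
  assumes "n \<ge> 1"
    and "rainbow n R"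
    and "\<forall>R'. rainbow n R' \<longrightarrow> rainbow_size n R' \<le> rainbow_size n R"
  shows "card R = (n + 1) div 2"
proof -
  let ?D = "arc_deficiency n ` R"
  have D: "finite ?D" "spaced ?D" "?D \<subseteq> {..<n}" "card ?D = card R"
    using assms(2) rainbow_arc_deficiencies[OF assms(2)]
    by (auto simp: rainbow_def card_image)
  then have "2 * card R \<le> n + 1"
    using card_spaced_le[of ?D 0 n] by (simp add: atLeast0LessThan)
  moreover have "\<not> 2 * card R < n"
  proof
    assume "2 * card R < n"
    then obtain F where F: "finite F" "spaced F" "F \<subseteq> {..<n}"
      and less: "(\<Sum>d\<in>?D. central_weight n d) < (\<Sum>d\<in>F. central_weight n d)"
      using spaced_central_weight_sum_improvable[OF D(1-3)] D(4) by metis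
    then have "F \<noteq> {}" by auto
    note F_rainbow = rainbow_centred_arcs[OF F this]
    have "rainbow_size n R < rainbow_size n (centred_arc n ` F)"
      using rainbow_size_le_central_weight_sum[OF assms(2)] less F_rainbow(2) by linarith
    then show False
      using assms(3) F_rainbow(1) by (simp add: not_le[symmetric])
  qed
  ultimately show ?thesis by linarith
qed

end
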